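(* Let $G$ be a finite group and $H$ a subgroup such that $\mathcal{O}_G(H)=\{K\mid H\le K\le G\}$ is Boolean of rank $2$, with coatoms $M_1,M_2$. If $H$ is normal in $M_1$ and in $M_2$, then $|M_1:H|\neq|M_2:H|$.
   Context: Boolean of rank $2$ means isomorphic to the lattice of subsets of a $2$-element set; the coatoms are the maximal elements of $\mathcal{O}_G(H)\setminus\{G\}$. *)

theory Defs
  imports "HOL-Algebra.Algebra"
begin

definition overgroups :: "('a, 'b) monoid_scheme \<Rightarrow> 'a set \<Rightarrow> 'a set set" where
  "overgroups G H = {K. subgroup K G \<and> H \<subseteq> K}"

definition boolean_rank2 :: "'a set set \<Rightarrow> bool" where
  "boolean_rank2 L \<longleftrightarrow> (\<exists>f. bij_betw f (Pow {0::nat, 1}) L \<and>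
      (\<forall>A\<in>Pow {0::nat, 1}. \<forall>B\<in>Pow {0::nat, 1}. A \<subseteq> B \<longleftrightarrow> f A \<subseteq> f B))"

definition coatom :: "('a, 'b) monoid_scheme \<Rightarrow> 'a set \<Rightarrow> 'a set \<Rightarrow> bool" where
  "coatom G H M \<longleftrightarrow> M \<in> overgroups G H - {carrier G} \<and>
      (\<forall>K\<in>overgroups G H - {carrier G}. M \<subseteq> K \<longrightarrow> K = M)"

definition sub_index :: "('a, 'b) monoid_scheme \<Rightarrow> 'a set \<Rightarrow> 'a set \<Rightarrow> nat" where
  "sub_index G M H = card (rcosets\<^bsub>G\<lparr>carrier := M\<rparr>\<^esub> H)"

end

theory Submission
  imports Defs
begin

text \<open>The Boolean hypothesis forces \<open>O\<^sub>G(H) = {H, M\<^sub>1, M\<^sub>2, G}\<close>, so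
  \<open>M\<^sub>1 \<inter> M\<^sub>2 = H\<close> and the normalizer of \<open>H\<close>, which contains \<open>M\<^sub>1\<close> and \<open>M\<^sub>2\<close>, is \<open>G\<close>.
  Hence \<open>H\<close> is normal and the subgroups of \<open>Q = G/H\<close> are \<open>1\<close>, \<open>A = M\<^sub>1/H\<close>,
  \<open>B = M\<^sub>2/H\<close> and \<open>Q\<close>, with \<open>A \<inter> B = 1\<close>. For \<open>a \<in> A - 1\<close> and \<open>b \<in> B - 1\<close> the
  product \<open>ab\<close> lies in neither \<open>A\<close> nor \<open>B\<close>, so it generates \<open>Q\<close>, which is therefore
  cyclic and abelian. If \<open>|A| = |B| = n\<close>, then \<open>(ab)\<^sup>n = a\<^sup>n b\<^sup>n = 1\<close>, so
  \<open>|Q| = ord(ab) \<le> n = |A|\<close> and \<open>A = Q\<close>, a contradiction.\<close>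

lemma boolean_rank2_eq_bot_coatoms_top:
  assumes "boolean_rank2 L"
    and bot: "B \<in> L" "\<And>K. K \<in> L \<Longrightarrow> B \<subseteq> K"
    and top: "T \<in> L" "\<And>K. K \<in> L \<Longrightarrow> K \<subseteq> T"
    and coatoms: "\<And>M. M \<in> {M1, M2} \<Longrightarrow> M \<in> L - {T} \<and> (\<forall>K\<in>L - {T}. M \<subseteq> K \<longrightarrow> K = M)"
    and "M1 \<noteq> M2"
  shows "L = {B, M1, M2, T}"
proof -
  let ?P = "Pow {0::nat, 1}"
  obtain f where bij: "bij_betw f ?P L"
    and mono: "\<And>U V. U \<in> ?P \<Longrightarrow> V \<in> ?P \<Longrightarrow> U \<subseteq> V \<longleftrightarrow> f U \<subseteq> f V"
    using assms(1) unfolding boolean_rank2_def by (elim exE conjE) (rule that, assumption, simp)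
  have L: "L = {f {}, f {0}, f {1}, f {0, 1}}"
  proof -
    have "?P = {{}, {0}, {1}, {0, 1}}"
      by blast
    then show ?thesis
      using bij by (simp add: bij_betw_def)
  qed
  have inj: "f U = f V \<longleftrightarrow> U = V" if "U \<in> ?P" "V \<in> ?P" for U V
    using bij that by (auto simp: bij_betw_def inj_on_def)
  have fB: "f {} = B"
  proof -
    obtain U where "U \<in> ?P" "B = f U"
      using bij bot(1) by (auto simp: bij_betw_def)
    then have "f {} \<subseteq> B"
      using mono[of "{}" U] by simp
    moreover have "B \<subseteq> f {}"
      using bot(2) L by simp
    ultimately show ?thesis
      by (rule antisym)
  qed
  have fT: "f {0, 1} = T"
  proof -
    obtain U where "U \<in> ?P" "T = f U"
      using bij top(1) by (auto simp: bij_betw_def)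
    then have "T \<subseteq> f {0, 1}"
      using mono[of U "{0, 1}"] by simp
    moreover have "f {0, 1} \<subseteq> T"
      using top(2) L by simp
    ultimately show ?thesis
      by (rule antisym[rotated])
  qed
  have "M = f {0} \<or> M = f {1}" if "M \<in> {M1, M2}" for M
  proof -
    have M: "M \<in> L - {T}" "\<forall>K\<in>L - {T}. M \<subseteq> K \<longrightarrow> K = M"
      using coatoms[OF that] by auto
    have "f {0} \<in> L - {T}"
      using L fT inj[of "{0}" "{0, 1}"] by auto
    moreover have "f {} \<subseteq> f {0}"
      using mono[of "{}" "{0}"] by simp
    moreover have "f {0} \<noteq> f {}"
      using inj[of "{0}" "{}"] by simp
    ultimately have "M \<noteq> f {}"
      using M(2) by blast
    then show ?thesis
      using M(1) L fB fT by auto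
  qed
  moreover have "f {0} \<noteq> f {1}"
    using inj[of "{0}" "{1}"] by simp
  ultimately have coatoms_eq: "{f {0}, f {1}} = {M1, M2}"
    using \<open>M1 \<noteq> M2\<close> by auto
  have "L = {B, f {0}, f {1}, T}"
    using L by (simp only: fB fT)
  also have "\<dots> = insert B ({f {0}, f {1}} \<union> {T})"
    by blast
  also have "\<dots> = {B, M1, M2, T}"
    unfolding coatoms_eq by blast
  finally show ?thesis .
qed

lemma coatom_not_subset:
  assumes "coatom G H M" and "coatom G H M'" and "M \<noteq> M'"
  shows "\<not> M \<subseteq> M'"
  using assms unfolding coatom_def by auto

lemma (in group) overgroups_eq_if_boolean_rank2:
  assumes "subgroup H G" and "boolean_rank2 (overgroups G H)"
    and "coatom G H M1" and "coatom G H M2" and "M1 \<noteq> M2"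
  shows "overgroups G H = {H, M1, M2, carrier G}"
proof (rule boolean_rank2_eq_bot_coatoms_top[OF assms(2) _ _ _ _ _ assms(5)])
  show "H \<in> overgroups G H" and "carrier G \<in> overgroups G H"
    using assms(1) subgroup_self subgroup.subset[OF assms(1)] by (auto simp: overgroups_def)
  show "H \<subseteq> K" and "K \<subseteq> carrier G" if "K \<in> overgroups G H" for K
    using that subgroup.subset by (auto simp: overgroups_def)
  show "M \<in> overgroups G H - {carrier G} \<and> (\<forall>K\<in>overgroups G H - {carrier G}. M \<subseteq> K \<longrightarrow> K = M)"
    if "M \<in> {M1, M2}" for M
    using that assms(3,4) unfolding coatom_def by auto
qed

lemma (in group) normal_if_normal_in_generating_pair:
  assumes M1: "subgroup M1 G" "H \<lhd> G\<lparr>carrier := M1\<rparr>"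
    and M2: "subgroup M2 G" "H \<lhd> G\<lparr>carrier := M2\<rparr>"
    and spanning: "\<And>K. subgroup K G \<Longrightarrow> M1 \<subseteq> K \<Longrightarrow> M2 \<subseteq> K \<Longrightarrow> K = carrier G"
  shows "H \<lhd> G"
proof -
  have H: "subgroup H G"
    using incl_subgroup[OF M1(1) normal_imp_subgroup[OF M1(2)]] .
  have "M \<subseteq> normalizer G H" if "subgroup M G" "H \<lhd> G\<lparr>carrier := M\<rparr>" for M
    using subgroup.subset[OF normal_imp_subgroup_normalizer[OF that]] by simp
  then have "normalizer G H = carrier G"
    using spanning normalizer_imp_subgroup subgroup.subset[OF H] M1 M2 by blast
  then show ?thesis
    using subgroup_in_normalizer[OF H] by simp
qed

lemma (in group) pow_card_subgroup_eq_one: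
  assumes "subgroup A G" and "a \<in> A"
  shows "a [^] card A = \<one>"
proof -
  have "a [^]\<^bsub>G\<lparr>carrier := A\<rparr>\<^esub> order (G\<lparr>carrier := A\<rparr>) = \<one>\<^bsub>G\<lparr>carrier := A\<rparr>\<^esub>"
    using group.pow_order_eq_1[OF subgroup_imp_group[OF assms(1)]] assms(2) by simp
  then show ?thesis
    by (simp add: order_def flip: nat_pow_consistent)
qed

lemma (in group) generate_mult_eq_carrier:
  assumes A: "subgroup A G" and B: "subgroup B G" and AB: "A \<inter> B = {\<one>}"
    and cover: "\<And>S. subgroup S G \<Longrightarrow> S \<subseteq> A \<or> S \<subseteq> B \<or> S = carrier G"
    and a: "a \<in> A" "a \<noteq> \<one>" and b: "b \<in> B" "b \<noteq> \<one>"
  shows "generate G {a \<otimes> b} = carrier G"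
proof -
  have ab: "a \<in> carrier G" "b \<in> carrier G"
    using subgroup.mem_carrier[OF A a(1)] subgroup.mem_carrier[OF B b(1)] .
  have "a \<otimes> b \<notin> A"
  proof
    assume "a \<otimes> b \<in> A"
    then have "inv a \<otimes> (a \<otimes> b) \<in> A"
      by (rule subgroup.m_closed[OF A subgroup.m_inv_closed[OF A a(1)]])
    moreover have "b = inv a \<otimes> (a \<otimes> b)"
      using ab by (simp add: inv_solve_left)
    ultimately show False
      using b AB by auto
  qed
  moreover have "a \<otimes> b \<notin> B"
  proof
    assume "a \<otimes> b \<in> B"
    then have "(a \<otimes> b) \<otimes> inv b \<in> B"
      by (rule subgroup.m_closed[OF B _ subgroup.m_inv_closed[OF B b(1)]])
    moreover have "a = (a \<otimes> b) \<otimes> inv b"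
      using ab by (simp add: inv_solve_right)
    ultimately show False
      using a AB by auto
  qed
  moreover have "a \<otimes> b \<in> generate G {a \<otimes> b}"
    by (rule generate.incl) simp
  ultimately show ?thesis
    using cover[OF generate_is_subgroup, of "{a \<otimes> b}"] ab by auto
qed

lemma (in group) comm_group_if_generate_singleton:
  assumes "c \<in> carrier G" and "generate G {c} = carrier G"
  shows "comm_group G"
proof -
  have "carrier G = range (\<lambda>k::int. c [^] k)"
    using assms(2) unfolding generate_pow[OF assms(1)] by blast
  then have "cyclic_group G"
    using assms(1) cyclic_group by blast
  then show ?thesis
    by (rule cyclic_imp_abelian_group)
qed

lemma (in group) card_subgroups_neq_if_cover:
  assumes fin: "finite (carrier G)"
    and A: "subgroup A G" and B: "subgroup B G"
    and AB: "A \<inter> B = {\<one>}" and "A \<noteq> {\<one>}"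
    and cover: "\<And>S. subgroup S G \<Longrightarrow> S \<subseteq> A \<or> S \<subseteq> B \<or> S = carrier G"
  shows "card A \<noteq> card B"
proof
  assume eq: "card A = card B"
  have one: "\<one> \<in> A" "\<one> \<in> B"
    using subgroup.one_closed[OF A] subgroup.one_closed[OF B] .
  obtain a where a: "a \<in> A" "a \<noteq> \<one>"
    using \<open>A \<noteq> {\<one>}\<close> one by blast
  have "B \<noteq> {\<one>}"
  proof
    assume "B = {\<one>}"
    then have "card A = 1"
      using eq by simp
    then show False
      using one(1) \<open>A \<noteq> {\<one>}\<close> by (auto simp: card_1_singleton_iff)
  qed
  then obtain b where b: "b \<in> B" "b \<noteq> \<one>"
    using one by blast
  have ab: "a \<in> carrier G" "b \<in> carrier G"
    using subgroup.mem_carrier[OF A a(1)] subgroup.mem_carrier[OF B b(1)] .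
  define c where "c = a \<otimes> b"
  have c: "c \<in> carrier G"
    using ab by (simp add: c_def)
  have gen: "generate G {c} = carrier G"
    unfolding c_def using generate_mult_eq_carrier[OF A B AB cover a b] .
  interpret comm_group G
    using comm_group_if_generate_singleton[OF c gen] .
  have "c [^] card A = a [^] card A \<otimes> b [^] card B"
    unfolding c_def eq using pow_mult_distrib[OF m_comm ab] ab by simp
  also have "\<dots> = \<one>"
    using pow_card_subgroup_eq_one A B a(1) b(1) by simp
  finally have "ord c dvd card A"
    using pow_eq_id[OF c] by simp
  moreover have "ord c = card (carrier G)"
    using generate_pow_card[OF c] gen by simp
  moreover have "card A > 0"
    using finite_subset[OF subgroup.subset[OF A] fin] one(1) by (auto simp: card_gt_0_iff)
  ultimately have "card (carrier G) \<le> card A"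
    by (metis dvd_imp_le)
  then have "A = carrier G" and "B = carrier G"
    using card_seteq[OF fin] subgroup.subset[OF A] subgroup.subset[OF B] eq by auto
  then show False
    using AB \<open>A \<noteq> {\<one>}\<close> by simp
qed

lemma (in group_hom) subgroup_vimage:
  assumes "subgroup S H"
  shows "subgroup (h -` S \<inter> carrier G) G"
proof (rule G.subgroupI)
  show "h -` S \<inter> carrier G \<subseteq> carrier G"
    by (rule Int_lower2)
  have "\<one> \<in> h -` S \<inter> carrier G"
    using subgroup.one_closed[OF assms] by simp
  then show "h -` S \<inter> carrier G \<noteq> {}"
    by blast
next
  fix a assume "a \<in> h -` S \<inter> carrier G"
  then show "inv a \<in> h -` S \<inter> carrier G"
    using subgroup.m_inv_closed[OF assms] by simp
next
  fix a b assume "a \<in> h -` S \<inter> carrier G" and "b \<in> h -` S \<inter> carrier G"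
  then show "a \<otimes> b \<in> h -` S \<inter> carrier G"
    using subgroup.m_closed[OF assms] by simp
qed

lemma sub_index_eq_card_rcos_image:
  "sub_index G M H = card ((\<lambda>a. H #>\<^bsub>G\<^esub> a) ` M)"
proof -
  have "rcosets\<^bsub>G\<lparr>carrier := M\<rparr>\<^esub> H = (\<lambda>a. H #>\<^bsub>G\<^esub> a) ` M"
    unfolding RCOSETS_def r_coset_def by auto
  then show ?thesis
    unfolding sub_index_def by simp
qed

lemma (in normal) group_hom_rcos_Mod: "group_hom G (G Mod H) (\<lambda>a. H #> a)"
  by (simp add: group_hom_def group_hom_axioms_def is_group factorgroup_is_group r_coset_hom_Mod)

lemma (in normal) vimage_rcos_image:
  assumes "K \<in> overgroups G H"
  shows "(\<lambda>a. H #> a) -` ((\<lambda>a. H #> a) ` K) \<inter> carrier G = K"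
proof -
  have K: "subgroup K G" "H \<subseteq> K"
    using assms by (auto simp: overgroups_def)
  have "x \<in> K" if "x \<in> carrier G" "k \<in> K" "H #> x = H #> k" for x k
  proof -
    have "x \<in> H #> k"
      using rcos_self[OF that(1) subgroup_axioms] that(3) by simp
    then obtain h where "h \<in> H" and "x = h \<otimes> k"
      unfolding r_coset_def by blast
    then show ?thesis
      using subgroup.m_closed[OF K(1) _ that(2)] K(2) by auto
  qed
  then show ?thesis
    using subgroup.subset[OF K(1)] by auto
qed

lemma (in normal) rcos_image_self: "(\<lambda>a. H #> a) ` H = {\<one>\<^bsub>G Mod H\<^esub>}"
proof -
  have "(\<lambda>a. H #> a) ` H = (\<lambda>a. H) ` H"
    by (rule image_cong[OF refl rcos_const[OF is_group]])
  also have "\<dots> = {H}"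
    by (rule image_constant[OF subgroup.one_closed[OF subgroup_axioms]])
  finally show ?thesis
    by simp
qed

lemma (in normal) subgroup_Mod_eq_rcos_image:
  assumes "subgroup S (G Mod H)"
  shows "\<exists>K \<in> overgroups G H. S = (\<lambda>a. H #> a) ` K"
proof
  let ?K = "(\<lambda>a. H #> a) -` S \<inter> carrier G"
  have "subgroup ?K G"
    using group_hom.subgroup_vimage[OF group_hom_rcos_Mod assms] .
  moreover have "H \<subseteq> ?K"
  proof
    fix h assume "h \<in> H"
    then have "H #> h = \<one>\<^bsub>G Mod H\<^esub>" and "h \<in> carrier G"
      using rcos_const[OF is_group] subset by auto
    then show "h \<in> ?K"
      using subgroup.one_closed[OF assms] by simp
  qed
  ultimately show "?K \<in> overgroups G H"
    by (simp add: overgroups_def)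
  show "S = (\<lambda>a. H #> a) ` ?K"
    using subgroup.subset[OF assms] by (auto simp: carrier_FactGroup)
qed

lemma (in normal) rcos_image_Int:
  assumes "K1 \<in> overgroups G H" and "K2 \<in> overgroups G H"
  shows "(\<lambda>a. H #> a) ` K1 \<inter> (\<lambda>a. H #> a) ` K2 = (\<lambda>a. H #> a) ` (K1 \<inter> K2)"
proof (intro equalityI subsetI)
  fix x assume "x \<in> (\<lambda>a. H #> a) ` K1 \<inter> (\<lambda>a. H #> a) ` K2"
  then obtain k where k: "k \<in> K1" "x = H #> k" "H #> k \<in> (\<lambda>a. H #> a) ` K2"
    by auto
  have "k \<in> carrier G"
    using k(1) assms(1) subgroup.subset by (auto simp: overgroups_def)
  then have "k \<in> (\<lambda>a. H #> a) -` ((\<lambda>a. H #> a) ` K2) \<inter> carrier G"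
    using k(3) by simp
  then have "k \<in> K2"
    unfolding vimage_rcos_image[OF assms(2)] .
  then show "x \<in> (\<lambda>a. H #> a) ` (K1 \<inter> K2)"
    using k(1,2) by simp
qed auto

lemma (in normal) sub_index_neq_if_overgroups_eq:
  assumes fin: "finite (carrier G)"
    and overgroups: "overgroups G H = {H, M1, M2, carrier G}"
    and meet: "M1 \<inter> M2 = H" and "M1 \<noteq> H"
  shows "sub_index G M1 H \<noteq> sub_index G M2 H"
proof -
  let ?\<pi> = "\<lambda>a. H #> a"
  interpret Mod: group "G Mod H"
    by (rule factorgroup_is_group)
  interpret \<pi>: group_hom G "G Mod H" ?\<pi>
    by (rule group_hom_rcos_Mod)
  have over: "H \<in> overgroups G H" "M1 \<in> overgroups G H" "M2 \<in> overgroups G H"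
    using overgroups by auto
  have sub: "subgroup M1 G" "subgroup M2 G"
    using over by (auto simp: overgroups_def)
  have AB: "?\<pi> ` M1 \<inter> ?\<pi> ` M2 = {\<one>\<^bsub>G Mod H\<^esub>}"
    unfolding rcos_image_Int[OF over(2,3)] meet rcos_image_self ..
  have A: "?\<pi> ` M1 \<noteq> {\<one>\<^bsub>G Mod H\<^esub>}"
  proof
    assume "?\<pi> ` M1 = {\<one>\<^bsub>G Mod H\<^esub>}"
    then have "M1 = H"
      using vimage_rcos_image[OF over(2)] vimage_rcos_image[OF over(1)]
      unfolding rcos_image_self by simp
    with \<open>M1 \<noteq> H\<close> show False ..
  qed
  have cover: "S \<subseteq> ?\<pi> ` M1 \<or> S \<subseteq> ?\<pi> ` M2 \<or> S = carrier (G Mod H)"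
    if S: "subgroup S (G Mod H)" for S
  proof -
    obtain K where K: "K \<in> {H, M1, M2, carrier G}" and S_eq: "S = ?\<pi> ` K"
      using subgroup_Mod_eq_rcos_image[OF S] unfolding overgroups by blast
    have "\<one>\<^bsub>G Mod H\<^esub> \<in> ?\<pi> ` M1"
      using AB by blast
    then show ?thesis
      using K unfolding S_eq
      by (elim insertE emptyE) (simp_all add: rcos_image_self carrier_FactGroup)
  qed
  have "finite (carrier (G Mod H))"
    using fin by (simp add: carrier_FactGroup)
  then have "card (?\<pi> ` M1) \<noteq> card (?\<pi> ` M2)"
    using Mod.card_subgroups_neq_if_cover \<pi>.subgroup_img_is_subgroup[OF sub(1)]
      \<pi>.subgroup_img_is_subgroup[OF sub(2)] AB A cover by blast
  then show ?thesis
    by (simp add: sub_index_eq_card_rcos_image)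
qed

theorem lemma10p1:
  fixes G (structure) and H M1 M2 :: "'a set"
  assumes "group G" and "finite (carrier G)"
    and "subgroup H G"
    and "boolean_rank2 (overgroups G H)"
    and "coatom G H M1" and "coatom G H M2" and "M1 \<noteq> M2"
    and "H \<lhd> G\<lparr>carrier := M1\<rparr>" and "H \<lhd> G\<lparr>carrier := M2\<rparr>"
  shows "sub_index G M1 H \<noteq> sub_index G M2 H"
proof -
  interpret group G by fact
  have incomparable: "\<not> M1 \<subseteq> M2" "\<not> M2 \<subseteq> M1"
    using coatom_not_subset[OF assms(5,6,7)] coatom_not_subset[OF assms(6,5) assms(7)[symmetric]] .
  have M: "subgroup M1 G" "H \<subseteq> M1" "M1 \<noteq> carrier G" "subgroup M2 G" "H \<subseteq> M2"
    using assms(5,6) by (auto simp: coatom_def overgroups_def)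
  have overgroups: "overgroups G H = {H, M1, M2, carrier G}"
    using overgroups_eq_if_boolean_rank2 assms(3-7) .
  have meet: "M1 \<inter> M2 = H"
  proof -
    have "M1 \<inter> M2 \<in> overgroups G H"
      using subgroups_Inter_pair[OF M(1,4)] M(2,5) by (simp add: overgroups_def)
    moreover have "M1 \<inter> M2 \<noteq> carrier G"
      using M(3) subgroup.subset[OF M(1)] by blast
    ultimately show ?thesis
      using overgroups incomparable by auto
  qed
  have "H \<lhd> G"
  proof (rule normal_if_normal_in_generating_pair[OF M(1) assms(8) M(4) assms(9)])
    fix K assume "subgroup K G" and "M1 \<subseteq> K" and "M2 \<subseteq> K"
    then have "K \<in> {H, M1, M2, carrier G}"
      using M(2) unfolding overgroups[symmetric] overgroups_def by auto
    then show "K = carrier G"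
      using incomparable M(2,5) \<open>M1 \<subseteq> K\<close> \<open>M2 \<subseteq> K\<close> by auto
  qed
  then interpret normal H G .
  show ?thesis
    using sub_index_neq_if_overgroups_eq[OF assms(2) overgroups meet] incomparable M(5) by blast
qed

end
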